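(* The extended Rota-Baxter algebra $(\text{Ш}_e(\mathbf{k}),\diamond,P_{\mathbf{k}})$ of weight $(\lambda,\kappa)$ is the initial object in the category of commutative extended Rota-Baxter algebras of weight $(\lambda,\kappa)$: for any commutative extended Rota-Baxter algebra $(R,P)$ of weight $(\lambda,\kappa)$ there exists a unique extended Rota-Baxter algebra homomorphism $\bar f:(\text{Ш}_e(\mathbf{k}),\diamond,P_{\mathbf{k}})\to(R,P)$.
   Context: $\mathbf{k}$ is a commutative unitary ring, $\lambda,\kappa\in\mathbf{k}$. An extended Rota-Baxter operator of weight $(\lambda,\kappa)$ on an algebra $R$ is a linear $P:R\to R$ with $P(x)P(y)=P(xP(y))+P(P(x)y)+\lambda P(xy)+\kappa xy$; homomorphisms are algebra homomorphisms commuting with the operators. $\text{Ш}_e(\mathbf{k})=\bigoplus_{n\ge0}\mathbf{k}\,\mathbf{1}^{\otimes(n+1)}$ with product $\mathbf{1}^{\otimes(m+1)}\diamond\mathbf{1}^{\otimes(n+1)}=\sum_{r=0}^{\min\{m,n\}}\sum_{i=0}^{r}\binom{m+n-r}{m}\binom{m}{r}\binom{r}{i}\lambda^{r-i}\kappa^i\mathbf{1}^{\otimes(m+n+1-r-i)}$, and $P_{\mathbf{k}}(\mathbf{1}^{\otimes n})=\mathbf{1}^{\otimes (n+1)}$. This is the free commutative extended Rota-Baxter algebra of weight $(\lambda,\kappa)$ on $\mathbf{k}$. *)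

theory Defs
  imports Main
begin

text \<open>Elements of Sha_e(k) are represented by their coefficient functions
  a :: nat \<Rightarrow> 'k, where a n is the coefficient of the basis vector 1^(n+1)
  (tensor power with n+1 factors); they must have finite support.\<close>

definition sha_carrier :: "(nat \<Rightarrow> 'k::comm_ring_1) set" where
  "sha_carrier = {a. finite {n. a n \<noteq> 0}}"

definition sha_basis :: "nat \<Rightarrow> nat \<Rightarrow> 'k::comm_ring_1" where
  "sha_basis n = (\<lambda>i. if i = n then 1 else 0)"

definition sha_add :: "(nat \<Rightarrow> 'k::comm_ring_1) \<Rightarrow> (nat \<Rightarrow> 'k) \<Rightarrow> nat \<Rightarrow> 'k" where
  "sha_add a b = (\<lambda>n. a n + b n)"

definition sha_smult :: "'k::comm_ring_1 \<Rightarrow> (nat \<Rightarrow> 'k) \<Rightarrow> nat \<Rightarrow> 'k" where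
  "sha_smult c a = (\<lambda>n. c * a n)"

text \<open>Coefficient of 1^(p+1) in the product 1^(m+1) \<diamond> 1^(n+1), with weight (l, k).\<close>
definition sha_coeff :: "'k::comm_ring_1 \<Rightarrow> 'k \<Rightarrow> nat \<Rightarrow> nat \<Rightarrow> nat \<Rightarrow> 'k" where
  "sha_coeff l k m n p =
     (\<Sum>r\<le>min m n. \<Sum>i\<le>r.
        if m + n - r - i = p
        then of_nat ((m + n - r) choose m) * of_nat (m choose r) * of_nat (r choose i)
             * l ^ (r - i) * k ^ i
        else 0)"

definition sha_mult :: "'k::comm_ring_1 \<Rightarrow> 'k \<Rightarrow> (nat \<Rightarrow> 'k) \<Rightarrow> (nat \<Rightarrow> 'k) \<Rightarrow> nat \<Rightarrow> 'k" where
  "sha_mult l k a b = (\<lambda>p. \<Sum>m\<in>{m. a m \<noteq> 0}. \<Sum>n\<in>{n. b n \<noteq> 0}. a m * b n * sha_coeff l k m n p)"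

definition sha_P :: "(nat \<Rightarrow> 'k::comm_ring_1) \<Rightarrow> nat \<Rightarrow> 'k" where
  "sha_P a = (\<lambda>p. if p = 0 then 0 else a (p - 1))"

text \<open>A commutative (unital) k-algebra R is given by a commutative ring 'r together with
  a unital ring homomorphism iota : k \<rightarrow> R (scalar action c\<cdot>x = iota c * x).\<close>
definition k_algebra_map :: "('k::comm_ring_1 \<Rightarrow> 'r::comm_ring_1) \<Rightarrow> bool" where
  "k_algebra_map iota \<longleftrightarrow> iota 1 = 1 \<and> (\<forall>x y. iota (x + y) = iota x + iota y)
     \<and> (\<forall>x y. iota (x * y) = iota x * iota y)"

definition ext_rota_baxter ::
  "('k::comm_ring_1 \<Rightarrow> 'r::comm_ring_1) \<Rightarrow> 'k \<Rightarrow> 'k \<Rightarrow> ('r \<Rightarrow> 'r) \<Rightarrow> bool" where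
  "ext_rota_baxter iota l k P \<longleftrightarrow>
     (\<forall>x y. P (x + y) = P x + P y) \<and>
     (\<forall>c x. P (iota c * x) = iota c * P x) \<and>
     (\<forall>x y. P x * P y = P (x * P y) + P (P x * y) + iota l * P (x * y) + iota k * (x * y))"

text \<open>Homomorphism of extended Rota-Baxter k-algebras from Sha_e(k) to (R, P)
  (only its values on the carrier of Sha_e(k) matter).\<close>
definition sha_hom ::
  "('k::comm_ring_1 \<Rightarrow> 'r::comm_ring_1) \<Rightarrow> 'k \<Rightarrow> 'k \<Rightarrow> ('r \<Rightarrow> 'r) \<Rightarrow> ((nat \<Rightarrow> 'k) \<Rightarrow> 'r) \<Rightarrow> bool" where
  "sha_hom iota l k P g \<longleftrightarrow>
     (\<forall>a\<in>sha_carrier. \<forall>b\<in>sha_carrier. g (sha_add a b) = g a + g b) \<and>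
     (\<forall>c. \<forall>a\<in>sha_carrier. g (sha_smult c a) = iota c * g a) \<and>
     (\<forall>a\<in>sha_carrier. \<forall>b\<in>sha_carrier. g (sha_mult l k a b) = g a * g b) \<and>
     g (sha_basis 0) = 1 \<and>
     (\<forall>a\<in>sha_carrier. g (sha_P a) = P (g a))"

end

theory Submission
  imports Defs
begin

text \<open>
  In a commutative extended Rota-Baxter algebra (R, P) of weight (lambda, kappa) put
  u n = P^n(1). Expanding u (m+1) * u (n+1) = P (u m) * P (u n) with the operator identity
  and inducting on m and n gives
    u m * u n = (SUM a + b <= min m n. C(m+n-a-b, m) C(m, a+b) C(a+b, b) lambda^a kappa^b u (m+n-a-2b)),
  the product of binomials being the multinomial coefficient
  (m+n-a-b)! / (a! b! (m-a-b)! (n-a-b)!), whose four-term Pascal rule is exactly the recursion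
  produced by the operator identity. With r = a + b and i = b these are the structure constants
  of the product on Sha_e(k), so the k-linear map sending 1^(n+1) to u n is a homomorphism of
  extended Rota-Baxter algebras. It is the only one: a homomorphism sends
  1^(n+1) = P_k^n(1^(1)) to P^n(1) and is k-linear.
\<close>

definition erb_coeff :: "nat \<Rightarrow> nat \<Rightarrow> nat \<Rightarrow> nat \<Rightarrow> nat" where
  "erb_coeff m n a b = ((m + n - (a + b)) choose m) * (m choose (a + b)) * ((a + b) choose b)"

lemma erb_coeff_eq_0: "min m n < a + b \<Longrightarrow> erb_coeff m n a b = 0"
  unfolding erb_coeff_def by (auto simp: binomial_eq_0)

lemma erb_coeff_0_left [simp]: "erb_coeff 0 n 0 0 = 1"
  and erb_coeff_0_right [simp]: "erb_coeff m 0 0 0 = 1"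
  by (simp_all add: erb_coeff_def)

lemma fact_mult_erb_coeff:
  "fact a * fact b * fact x * fact y * erb_coeff (a + b + x) (a + b + y) a b = (fact (a + b + x + y) :: nat)"
proof -
  have "fact a * fact b * ((a + b) choose b) = (fact (a + b) :: nat)"
    using binomial_fact_lemma[of b "a + b"] by (simp add: ac_simps)
  moreover have "fact (a + b) * fact x * ((a + b + x) choose (a + b)) = (fact (a + b + x) :: nat)"
    using binomial_fact_lemma[of "a + b" "a + b + x"] by simp
  moreover have "fact (a + b + x) * fact y * ((a + b + x + y) choose (a + b + x)) = (fact (a + b + x + y) :: nat)"
    using binomial_fact_lemma[of "a + b + x" "a + b + x + y"] by simp
  moreover have "a + b + x + (a + b + y) - (a + b) = a + b + x + y" by simp
  ultimately show ?thesis
    unfolding erb_coeff_def by (metis mult.assoc mult.commute)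
qed

lemma erb_coeff_commute: "erb_coeff m n a b = erb_coeff n m a b"
proof (cases "a + b \<le> min m n")
  case True
  then obtain x y where "m = a + b + x" and "n = a + b + y"
    by (metis le_add_diff_inverse min.bounded_iff)
  then have "fact a * fact b * fact x * fact y * erb_coeff m n a b
      = fact a * fact b * fact x * fact y * erb_coeff n m a b"
    using fact_mult_erb_coeff[of a b x y] fact_mult_erb_coeff[of a b y x] by (simp add: ac_simps)
  then show ?thesis by simp
next
  case False
  then have "min m n < a + b" and "min n m < a + b" by auto
  then show ?thesis by (metis erb_coeff_eq_0)
qed

lemma erb_coeff_swap_weights: "erb_coeff m n a b = erb_coeff m n b a"
  unfolding erb_coeff_def using binomial_symmetric[of b "a + b"] by (simp add: add.commute)

lemma fact_mult_erb_coeff_pred_left: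
  assumes "Suc m = a + b + x" and "Suc n = a + b + y"
  shows "fact a * fact b * fact x * fact y * erb_coeff m (Suc n) a b = x * fact (a + b + x + y - 1)"
proof (cases x)
  case 0
  then show ?thesis using assms(1) by (simp add: erb_coeff_eq_0)
next
  case (Suc x')
  then show ?thesis using assms fact_mult_erb_coeff[of a b x' y] by (simp add: algebra_simps)
qed

lemma fact_mult_erb_coeff_pred_weight:
  assumes "Suc m = a + b + x" and "Suc n = a + b + y"
  shows "fact a * fact b * fact x * fact y * (if 0 < a then erb_coeff m n (a - 1) b else 0)
    = a * fact (a + b + x + y - 1)"
proof (cases a)
  case (Suc a')
  then show ?thesis using assms fact_mult_erb_coeff[of a' b x y] by (simp add: algebra_simps)
qed simp

lemma fact_mult_erb_coeff_recurrence:
  assumes m: "Suc m = a + b + x" and n: "Suc n = a + b + y"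
  shows "fact a * fact b * fact x * fact y * (erb_coeff m (Suc n) a b + erb_coeff (Suc m) n a b
      + (if 0 < a then erb_coeff m n (a - 1) b else 0) + (if 0 < b then erb_coeff m n a (b - 1) else 0))
    = fact (a + b + x + y)"
proof -
  define F :: nat where "F = fact a * fact b * fact x * fact y"
  define T where "T = a + b + x + y"
  have "F * erb_coeff m (Suc n) a b = x * fact (T - 1)"
    unfolding F_def T_def by (rule fact_mult_erb_coeff_pred_left[OF m n])
  moreover have "F * erb_coeff (Suc m) n a b = y * fact (T - 1)"
    using fact_mult_erb_coeff_pred_left[OF n m] unfolding F_def T_def
    by (simp add: erb_coeff_commute[of "Suc m"] ac_simps)
  moreover have "F * (if 0 < a then erb_coeff m n (a - 1) b else 0) = a * fact (T - 1)"
    unfolding F_def T_def by (rule fact_mult_erb_coeff_pred_weight[OF m n])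
  moreover have "F * (if 0 < b then erb_coeff m n a (b - 1) else 0) = b * fact (T - 1)"
  proof -
    have "F * (if 0 < b then erb_coeff m n a (b - 1) else 0)
        = fact b * fact a * fact x * fact y * (if 0 < b then erb_coeff m n (b - 1) a else 0)"
      unfolding F_def erb_coeff_swap_weights[of m n a] by (simp only: ac_simps)
    also have "\<dots> = b * fact (b + a + x + y - 1)"
      using m n by (intro fact_mult_erb_coeff_pred_weight) simp_all
    finally show ?thesis by (simp add: T_def ac_simps)
  qed
  moreover have "(x + y + a + b) * fact (T - 1) = (fact T :: nat)"
  proof -
    have "0 < T" using m unfolding T_def by linarith
    then show ?thesis unfolding fact_reduce[OF \<open>0 < T\<close>] by (simp add: T_def)
  qed
  ultimately show ?thesis
    unfolding F_def[symmetric] T_def[symmetric] by (simp only: distrib_left distrib_right)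
qed

lemma erb_coeff_Suc_Suc:
  "erb_coeff (Suc m) (Suc n) a b = erb_coeff m (Suc n) a b + erb_coeff (Suc m) n a b
     + (if 0 < a then erb_coeff m n (a - 1) b else 0) + (if 0 < b then erb_coeff m n a (b - 1) else 0)"
proof (cases "a + b \<le> Suc m \<and> a + b \<le> Suc n")
  case False
  then have "Suc (min m n) < a + b" by auto
  then have "erb_coeff (Suc m) (Suc n) a b = 0" "erb_coeff m (Suc n) a b = 0"
    "erb_coeff (Suc m) n a b = 0" "erb_coeff m n (a - 1) b = 0" "erb_coeff m n a (b - 1) = 0"
    by (auto intro!: erb_coeff_eq_0)
  then show ?thesis by (simp only: if_cancel add_0)
next
  case True
  then obtain x y where m: "Suc m = a + b + x" and n: "Suc n = a + b + y"
    by (metis le_add_diff_inverse)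
  have "fact a * fact b * fact x * fact y * erb_coeff (Suc m) (Suc n) a b = (fact (a + b + x + y) :: nat)"
    unfolding m n by (rule fact_mult_erb_coeff)
  moreover have "fact a * fact b * fact x * fact y \<noteq> (0 :: nat)" by simp
  ultimately show ?thesis using fact_mult_erb_coeff_recurrence[OF m n] by (metis mult_left_cancel)
qed

lemma finite_triangle: "finite {(a, b). a + b \<le> (N::nat)}"
  by (rule finite_subset[of _ "{..N} \<times> {..N}"]) auto

lemma sum_triangle_shift_fst:
  "(\<Sum>(a, b)\<in>{(a, b). a + b \<le> Suc N}. if 0 < a then f (a - 1) b else 0)
     = (\<Sum>(a, b)\<in>{(a, b). a + b \<le> N}. f a b)"
  by (rule sym, rule sum.reindex_bij_witness_not_neutral[where S' = "{}" and T' = "{0} \<times> {..Suc N}"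
        and j = "\<lambda>(a, b). (Suc a, b)" and i = "\<lambda>(a, b). (a - 1, b)"]) auto

lemma sum_triangle_shift_snd:
  "(\<Sum>(a, b)\<in>{(a, b). a + b \<le> Suc N}. if 0 < b then f a (b - 1) else 0)
     = (\<Sum>(a, b)\<in>{(a, b). a + b \<le> N}. f a b)"
  by (rule sym, rule sum.reindex_bij_witness_not_neutral[where S' = "{}" and T' = "{..Suc N} \<times> {0}"
        and j = "\<lambda>(a, b). (a, Suc b)" and i = "\<lambda>(a, b). (a, b - 1)"]) auto

lemma sum_triangle_truncate:
  fixes f :: "nat \<Rightarrow> nat \<Rightarrow> 'a::comm_monoid_add"
  assumes "\<And>a b. M < a + b \<Longrightarrow> f a b = 0" and "M \<le> N"
  shows "(\<Sum>(a, b)\<in>{(a, b). a + b \<le> N}. f a b) = (\<Sum>(a, b)\<in>{(a, b). a + b \<le> M}. f a b)"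
  by (rule sum.mono_neutral_right) (use assms finite_triangle in \<open>auto intro: leI\<close>)

lemma sum_atMost_atMost_eq_triangle:
  "(\<Sum>r\<le>N. \<Sum>i\<le>r. f r i) = (\<Sum>(a, b)\<in>{(a, b). a + b \<le> (N::nat)}. f (a + b) b)"
proof -
  have "(\<Sum>r\<le>N. \<Sum>i\<le>r. f r i) = (\<Sum>(r, i)\<in>(SIGMA r:{..N}. {..r}). f r i)"
    by (rule sum.Sigma) auto
  also have "\<dots> = (\<Sum>(a, b)\<in>{(a, b). a + b \<le> N}. f (a + b) b)"
    by (rule sum.reindex_bij_witness[where i = "\<lambda>(a, b). (a + b, b)" and j = "\<lambda>(r, i). (r - i, i)"]) auto
  finally show ?thesis .
qed

lemma sha_coeff_eq_0: "m + n < p \<Longrightarrow> sha_coeff l k m n p = 0"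
  unfolding sha_coeff_def by (intro sum.neutral ballI) auto

lemma sha_mult_eq_0:
  assumes "\<forall>m. a m \<noteq> 0 \<longrightarrow> m \<le> M" and "\<forall>n. b n \<noteq> 0 \<longrightarrow> n \<le> N" and "M + N < p"
  shows "sha_mult l k a b p = 0"
  unfolding sha_mult_def
proof (intro sum.neutral ballI)
  fix m n assume "m \<in> {m. a m \<noteq> 0}" and "n \<in> {n. b n \<noteq> 0}"
  then have "m + n < p" using assms by fastforce
  then show "a m * b n * sha_coeff l k m n p = 0" by (simp add: sha_coeff_eq_0)
qed

lemma sha_basis_carrier: "sha_basis n \<in> sha_carrier"
  unfolding sha_carrier_def sha_basis_def by simp

lemma sha_basis_Suc: "sha_basis (Suc n) = sha_P (sha_basis n)"
  unfolding sha_basis_def sha_P_def by (auto simp: fun_eq_iff)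

locale k_algebra =
  fixes iota :: "'k::comm_ring_1 \<Rightarrow> 'r::comm_ring_1"
  assumes k_algebra_map: "k_algebra_map iota"
begin

lemma iota_1 [simp]: "iota 1 = 1"
  and iota_add [simp]: "iota (x + y) = iota x + iota y"
  and iota_mult [simp]: "iota (x * y) = iota x * iota y"
  using k_algebra_map by (simp_all add: k_algebra_map_def)

lemma iota_0 [simp]: "iota 0 = 0"
  using iota_add[of 0 0] by simp

lemma iota_sum: "iota (sum f A) = (\<Sum>x\<in>A. iota (f x))"
  by (induction A rule: infinite_finite_induct) simp_all

definition sha_eval :: "(nat \<Rightarrow> 'r) \<Rightarrow> (nat \<Rightarrow> 'k) \<Rightarrow> 'r" where
  "sha_eval u a = (\<Sum>p | a p \<noteq> 0. iota (a p) * u p)"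

lemma sha_eval_eq_sum:
  assumes "finite S" and "{p. a p \<noteq> 0} \<subseteq> S"
  shows "sha_eval u a = (\<Sum>p\<in>S. iota (a p) * u p)"
  unfolding sha_eval_def by (rule sum.mono_neutral_left) (use assms in auto)

lemma sha_eval_add:
  assumes "a \<in> sha_carrier" and "b \<in> sha_carrier"
  shows "sha_eval u (sha_add a b) = sha_eval u a + sha_eval u b"
proof -
  let ?S = "{p. a p \<noteq> 0} \<union> {p. b p \<noteq> 0}"
  have S: "finite ?S" using assms by (simp add: sha_carrier_def)
  have "sha_eval u (sha_add a b) = (\<Sum>p\<in>?S. iota (sha_add a b p) * u p)"
    by (rule sha_eval_eq_sum[OF S]) (auto simp: sha_add_def)
  also have "\<dots> = (\<Sum>p\<in>?S. iota (a p) * u p) + (\<Sum>p\<in>?S. iota (b p) * u p)"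
    by (simp add: sha_add_def distrib_right sum.distrib)
  also have "\<dots> = sha_eval u a + sha_eval u b"
    using sha_eval_eq_sum[OF S, of a] sha_eval_eq_sum[OF S, of b] by auto
  finally show ?thesis .
qed

lemma sha_eval_smult:
  assumes "a \<in> sha_carrier"
  shows "sha_eval u (sha_smult c a) = iota c * sha_eval u a"
proof -
  let ?S = "{p. a p \<noteq> 0}"
  have S: "finite ?S" using assms by (simp add: sha_carrier_def)
  have "sha_eval u (sha_smult c a) = (\<Sum>p\<in>?S. iota (sha_smult c a p) * u p)"
    by (rule sha_eval_eq_sum[OF S]) (auto simp: sha_smult_def)
  also have "\<dots> = iota c * sha_eval u a"
    by (simp add: sha_smult_def sha_eval_def sum_distrib_left ac_simps)
  finally show ?thesis .
qed

lemma sha_eval_basis: "sha_eval u (sha_basis n) = u n"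
  using sha_eval_eq_sum[of "{n}" "sha_basis n"] by (simp add: sha_basis_def)

lemma sha_eval_mult:
  assumes coeff: "\<And>m n K. m + n \<le> K \<Longrightarrow> (\<Sum>p\<le>K. iota (sha_coeff l k m n p) * u p) = u m * u n"
    and "a \<in> sha_carrier" and "b \<in> sha_carrier"
  shows "sha_eval u (sha_mult l k a b) = sha_eval u a * sha_eval u b"
proof -
  let ?A = "{m. a m \<noteq> 0}" and ?B = "{n. b n \<noteq> 0}"
  have "finite (?A \<union> ?B)" using assms(2,3) by (simp add: sha_carrier_def)
  then obtain M where M: "\<forall>i\<in>?A \<union> ?B. i \<le> M"
    by (auto simp: finite_nat_set_iff_bounded_le)
  then have "{p. sha_mult l k a b p \<noteq> 0} \<subseteq> {..M + M}"
    using sha_mult_eq_0[of a M b M] by (auto intro: leI)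
  then have "sha_eval u (sha_mult l k a b) = (\<Sum>p\<le>M + M. iota (sha_mult l k a b p) * u p)"
    by (simp add: sha_eval_eq_sum)
  also have "\<dots> = (\<Sum>p\<le>M + M. \<Sum>m\<in>?A. \<Sum>n\<in>?B. iota (a m) * iota (b n) * (iota (sha_coeff l k m n p) * u p))"
    unfolding sha_mult_def iota_sum sum_distrib_right by (simp add: ac_simps)
  also have "\<dots> = (\<Sum>m\<in>?A. \<Sum>n\<in>?B. iota (a m) * iota (b n) * (\<Sum>p\<le>M + M. iota (sha_coeff l k m n p) * u p))"
    unfolding sum_distrib_left by (subst sum.swap) (simp only: sum.swap[of _ "{..M + M}"])
  also have "\<dots> = (\<Sum>m\<in>?A. \<Sum>n\<in>?B. iota (a m) * u m * (iota (b n) * u n))"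
  proof (intro sum.cong refl)
    fix m n assume "m \<in> ?A" "n \<in> ?B"
    then have "m + n \<le> M + M" using M by (simp add: add_mono)
    then show "iota (a m) * iota (b n) * (\<Sum>p\<le>M + M. iota (sha_coeff l k m n p) * u p)
        = iota (a m) * u m * (iota (b n) * u n)"
      unfolding coeff[OF \<open>m + n \<le> M + M\<close>] by (simp add: ac_simps)
  qed
  also have "\<dots> = sha_eval u a * sha_eval u b"
    by (simp add: sha_eval_def sum_product)
  finally show ?thesis .
qed

lemma sha_eval_unique:
  assumes add: "\<And>x y. x \<in> sha_carrier \<Longrightarrow> y \<in> sha_carrier \<Longrightarrow> h (sha_add x y) = h x + h y"
    and smult: "\<And>c x. x \<in> sha_carrier \<Longrightarrow> h (sha_smult c x) = iota c * h x"
    and basis: "\<And>n. h (sha_basis n) = u n"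
    and a: "a \<in> sha_carrier"
  shows "h a = sha_eval u a"
proof -
  have "h a = (\<Sum>p\<in>F. iota (a p) * u p)" if "finite F" "{p. a p \<noteq> 0} \<subseteq> F" for F a
    using that
  proof (induction F arbitrary: a rule: finite_induct)
    case empty
    have zero: "(\<lambda>_. 0) \<in> sha_carrier" by (simp add: sha_carrier_def)
    have "sha_add (\<lambda>_. 0) (\<lambda>_. 0) = (\<lambda>_. 0 :: 'k)" by (simp add: sha_add_def)
    then have "h (\<lambda>_. 0) = 0" using add[OF zero zero] by simp
    moreover have "a = (\<lambda>_. 0)" using empty by auto
    ultimately show ?case by simp
  next
    case (insert x F)
    have a_split: "a = sha_add (sha_smult (a x) (sha_basis x)) (a(x := 0))"
      by (auto simp: sha_add_def sha_smult_def sha_basis_def)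
    have "sha_smult (a x) (sha_basis x) \<in> sha_carrier" "a(x := 0) \<in> sha_carrier"
      using insert(1,4) by (auto simp: sha_carrier_def sha_smult_def sha_basis_def
          intro: finite_subset[of _ "{x}"] finite_subset[of _ F])
    then have "h a = iota (a x) * u x + h (a(x := 0))"
      by (subst a_split) (simp add: add smult sha_basis_carrier basis)
    also have "h (a(x := 0)) = (\<Sum>p\<in>F. iota ((a(x := 0)) p) * u p)"
      using insert.prems by (intro insert.IH) auto
    also have "\<dots> = (\<Sum>p\<in>F. iota (a p) * u p)"
      using insert(2) by (intro sum.cong) auto
    finally show ?case using insert(1,2) by simp
  qed
  then show ?thesis using a by (simp add: sha_eval_def sha_carrier_def)
qed

end

locale ext_rota_baxter_algebra = k_algebra iota
  for iota :: "'k::comm_ring_1 \<Rightarrow> 'r::comm_ring_1" +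
  fixes l k :: 'k and P :: "'r \<Rightarrow> 'r"
  assumes ext_rota_baxter: "ext_rota_baxter iota l k P"
begin

lemma P_add: "P (x + y) = P x + P y"
  and P_scalar: "P (iota c * x) = iota c * P x"
  and P_mult_P: "P x * P y = P (x * P y) + P (P x * y) + iota l * P (x * y) + iota k * (x * y)"
  using ext_rota_baxter by (simp_all add: ext_rota_baxter_def)

lemma P_0: "P 0 = 0"
  using P_add[of 0 0] by simp

lemma P_sum: "P (sum f A) = (\<Sum>x\<in>A. P (f x))"
  by (induction A rule: infinite_finite_induct) (simp_all add: P_0 P_add)

definition P_iter :: "nat \<Rightarrow> 'r" where
  "P_iter n = (P ^^ n) 1"

lemma P_iter_0 [simp]: "P_iter 0 = 1"
  and P_iter_Suc [simp]: "P_iter (Suc n) = P (P_iter n)"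
  by (simp_all add: P_iter_def)

definition mult_term :: "nat \<Rightarrow> nat \<Rightarrow> nat \<Rightarrow> nat \<Rightarrow> 'r" where
  "mult_term m n a b = iota (of_nat (erb_coeff m n a b) * l ^ a * k ^ b) * P_iter (m + n - (a + b) - b)"

lemma mult_term_eq_0: "min m n < a + b \<Longrightarrow> mult_term m n a b = 0"
  by (simp add: mult_term_def erb_coeff_eq_0)

lemma P_mult_term:
  "P (mult_term m n a b) = iota (of_nat (erb_coeff m n a b) * l ^ a * k ^ b) * P_iter (Suc (m + n) - (a + b) - b)"
proof (cases "a + b \<le> min m n")
  case True
  then have "Suc (m + n) - (a + b) - b = Suc (m + n - (a + b) - b)" by arith
  then show ?thesis unfolding mult_term_def P_scalar by simp
next
  case False
  then have "erb_coeff m n a b = 0" by (intro erb_coeff_eq_0) (auto simp: min_def)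
  then show ?thesis by (simp add: mult_term_def P_0)
qed

lemma mult_term_Suc_Suc:
  "mult_term (Suc m) (Suc n) a b = P (mult_term m (Suc n) a b) + P (mult_term (Suc m) n a b)
     + (if 0 < a then iota l * P (mult_term m n (a - 1) b) else 0)
     + (if 0 < b then iota k * mult_term m n a (b - 1) else 0)"
proof -
  let ?c = "\<lambda>d. iota (of_nat d * l ^ a * k ^ b) * P_iter (Suc m + Suc n - (a + b) - b)"
  have "mult_term (Suc m) (Suc n) a b = ?c (erb_coeff m (Suc n) a b) + ?c (erb_coeff (Suc m) n a b)
      + ?c (if 0 < a then erb_coeff m n (a - 1) b else 0) + ?c (if 0 < b then erb_coeff m n a (b - 1) else 0)"
    unfolding mult_term_def erb_coeff_Suc_Suc[of m n] by (simp only: of_nat_add distrib_right iota_add)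
  moreover have "?c (erb_coeff m (Suc n) a b) = P (mult_term m (Suc n) a b)"
    by (simp add: P_mult_term)
  moreover have "?c (erb_coeff (Suc m) n a b) = P (mult_term (Suc m) n a b)"
    by (simp add: P_mult_term)
  moreover have "?c (if 0 < a then erb_coeff m n (a - 1) b else 0)
      = (if 0 < a then iota l * P (mult_term m n (a - 1) b) else 0)"
    by (cases a) (simp_all add: P_mult_term ac_simps)
  moreover have "?c (if 0 < b then erb_coeff m n a (b - 1) else 0)
      = (if 0 < b then iota k * mult_term m n a (b - 1) else 0)"
    by (cases b) (simp_all add: mult_term_def ac_simps)
  ultimately show ?thesis by simp
qed

lemma sum_mult_term_truncate:
  "min m n \<le> N \<Longrightarrow> (\<Sum>(a, b)\<in>{(a, b). a + b \<le> N}. mult_term m n a b)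
     = (\<Sum>(a, b)\<in>{(a, b). a + b \<le> min m n}. mult_term m n a b)"
  by (rule sum_triangle_truncate) (auto intro: mult_term_eq_0)

lemma P_iter_mult:
  "min m n \<le> N \<Longrightarrow> P_iter m * P_iter n = (\<Sum>(a, b)\<in>{(a, b). a + b \<le> N}. mult_term m n a b)"
proof (induction m arbitrary: n N)
  case 0
  then show ?case using sum_mult_term_truncate[of 0 n N] by (simp add: mult_term_def)
next
  case (Suc m)
  note IH_m = Suc.IH
  show ?case using Suc.prems
  proof (induction n arbitrary: N)
    case 0
    then show ?case using sum_mult_term_truncate[of "Suc m" 0 N] by (simp add: mult_term_def)
  next
    case (Suc n)
    then obtain N' where N: "N = Suc N'" by (cases N) auto
    let ?T = "\<lambda>N. {(a, b). a + b \<le> N}"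
    have IH1: "P_iter m * P_iter (Suc n) = (\<Sum>(a, b)\<in>?T N. mult_term m (Suc n) a b)"
      using Suc.prems by (intro IH_m) simp
    have IH2: "P_iter (Suc m) * P_iter n = (\<Sum>(a, b)\<in>?T N. mult_term (Suc m) n a b)"
      using Suc.prems by (intro Suc.IH) simp
    have IH3: "P_iter m * P_iter n = (\<Sum>(a, b)\<in>?T N'. mult_term m n a b)"
      using Suc.prems N by (intro IH_m) simp
    have "P_iter (Suc m) * P_iter (Suc n) = P (P_iter m * P_iter (Suc n)) + P (P_iter (Suc m) * P_iter n)
        + iota l * P (P_iter m * P_iter n) + iota k * (P_iter m * P_iter n)"
      unfolding P_iter_Suc by (rule P_mult_P)
    also have "\<dots> = (\<Sum>(a, b)\<in>?T N. P (mult_term m (Suc n) a b)) + (\<Sum>(a, b)\<in>?T N. P (mult_term (Suc m) n a b))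
        + (\<Sum>(a, b)\<in>?T N'. iota l * P (mult_term m n a b)) + (\<Sum>(a, b)\<in>?T N'. iota k * mult_term m n a b)"
      unfolding IH1 IH2 IH3 P_sum sum_distrib_left by (simp only: prod.case_distrib)
    also have "\<dots> = (\<Sum>(a, b)\<in>?T N. P (mult_term m (Suc n) a b)) + (\<Sum>(a, b)\<in>?T N. P (mult_term (Suc m) n a b))
        + (\<Sum>(a, b)\<in>?T N. if 0 < a then iota l * P (mult_term m n (a - 1) b) else 0)
        + (\<Sum>(a, b)\<in>?T N. if 0 < b then iota k * mult_term m n a (b - 1) else 0)"
      using sum_triangle_shift_fst[where N = N' and f = "\<lambda>a b. iota l * P (mult_term m n a b)"]
        sum_triangle_shift_snd[where N = N' and f = "\<lambda>a b. iota k * mult_term m n a b"]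
      unfolding N by simp
    also have "\<dots> = (\<Sum>(a, b)\<in>?T N. mult_term (Suc m) (Suc n) a b)"
      unfolding mult_term_Suc_Suc by (simp add: sum.distrib case_prod_unfold)
    finally show ?case .
  qed
qed

lemma sum_sha_coeff_P_iter:
  assumes "m + n \<le> K"
  shows "(\<Sum>p\<le>K. iota (sha_coeff l k m n p) * P_iter p) = P_iter m * P_iter n"
proof -
  let ?c = "\<lambda>r i. of_nat ((m + n - r) choose m) * of_nat (m choose r) * of_nat (r choose i) * l ^ (r - i) * k ^ i"
  have "(\<Sum>p\<le>K. iota (sha_coeff l k m n p) * P_iter p)
      = (\<Sum>p\<le>K. \<Sum>r\<le>min m n. \<Sum>i\<le>r. if m + n - r - i = p then iota (?c r i) * P_iter p else 0)"
    unfolding sha_coeff_def iota_sum sum_distrib_right by (intro sum.cong refl) simp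
  also have "\<dots> = (\<Sum>r\<le>min m n. \<Sum>i\<le>r. \<Sum>p\<le>K. if m + n - r - i = p then iota (?c r i) * P_iter p else 0)"
    by (subst sum.swap) (simp only: sum.swap[of _ "{..K}"])
  also have "\<dots> = (\<Sum>r\<le>min m n. \<Sum>i\<le>r. iota (?c r i) * P_iter (m + n - r - i))"
  proof -
    have "m + n - j \<le> K" for j using assms by simp
    then show ?thesis by (intro sum.cong refl) simp
  qed
  also have "\<dots> = (\<Sum>(a, b)\<in>{(a, b). a + b \<le> min m n}. mult_term m n a b)"
    unfolding sum_atMost_atMost_eq_triangle
    by (intro sum.cong refl) (auto simp: mult_term_def erb_coeff_def diff_diff_add)
  also have "\<dots> = P_iter m * P_iter n"
    by (rule P_iter_mult[symmetric]) simp
  finally show ?thesis .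
qed

lemma sha_eval_P:
  assumes "a \<in> sha_carrier"
  shows "sha_eval P_iter (sha_P a) = P (sha_eval P_iter a)"
proof -
  let ?S = "{p. a p \<noteq> 0}"
  have S: "finite ?S" using assms by (simp add: sha_carrier_def)
  have "sha_eval P_iter (sha_P a) = (\<Sum>p\<in>Suc ` ?S. iota (sha_P a p) * P_iter p)"
    by (rule sha_eval_eq_sum) (use S in \<open>auto simp: sha_P_def image_iff gr0_conv_Suc\<close>)
  also have "\<dots> = (\<Sum>p\<in>?S. iota (a p) * P (P_iter p))"
    by (simp add: sum.reindex sha_P_def)
  also have "\<dots> = P (sha_eval P_iter a)"
    by (simp add: sha_eval_def P_sum P_scalar)
  finally show ?thesis .
qed

lemma sha_hom_sha_eval: "sha_hom iota l k P (sha_eval P_iter)"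
  unfolding sha_hom_def
  by (simp add: sha_eval_add sha_eval_smult sha_eval_mult[OF sum_sha_coeff_P_iter] sha_eval_basis sha_eval_P)

lemma sha_hom_eq_sha_eval:
  assumes "sha_hom iota l k P h" and "a \<in> sha_carrier"
  shows "h a = sha_eval P_iter a"
proof (rule sha_eval_unique)
  show "h (sha_basis n) = P_iter n" for n
    using assms(1) by (induction n) (simp_all add: sha_hom_def sha_basis_Suc sha_basis_carrier)
qed (use assms in \<open>simp_all add: sha_hom_def\<close>)

end

theorem corollary3p5:
  fixes iota :: "'k::comm_ring_1 \<Rightarrow> 'r::comm_ring_1"
    and l k :: 'k and P :: "'r \<Rightarrow> 'r"
  assumes "k_algebra_map iota"
    and "ext_rota_baxter iota l k P"
  shows "\<exists>g. sha_hom iota l k P g \<and>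
           (\<forall>h. sha_hom iota l k P h \<longrightarrow> (\<forall>a\<in>sha_carrier. h a = g a))"
proof -
  interpret ext_rota_baxter_algebra iota l k P
    using assms by unfold_locales
  show ?thesis
    using sha_hom_sha_eval sha_hom_eq_sha_eval by blast
qed

end
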